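(* Let $m\ge 5$ and $H=\Theta(l_1,\ldots,l_m)$ with $l_1=2$ and $l_2=\cdots=l_m=4$, and let $G=H^2$. Then $G$ is equitably $(m+2)$-choosable.
   Context: $\Theta(l_1,\ldots,l_m)$ denotes the graph consisting of two vertices $u,w$ joined by $m$ internally disjoint paths of lengths $l_1,\ldots,l_m$. For a graph $H$, $H^2$ has vertex set $V(H)$ with two vertices adjacent iff their distance in $H$ is 1 or 2. A $k$-assignment $L$ assigns to each vertex a set of exactly $k$ colors; an equitable $L$-coloring of $G$ is a proper coloring $f$ with $f(v)\in L(v)$ such that no color is used more than $\lceil |V(G)|/k\rceil$ times; $G$ is equitably $k$-choosable if it has an equitable $L$-coloring for every $k$-assignment $L$. *)

theory Defs
  imports Complex_Main
begin

text \<open>Vertices of a theta graph: the two branch vertices u, w and the internal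
  vertices TP i j (j-th internal vertex, 1 \<le> j < l_i, of the i-th path, 0-indexed i).\<close>
datatype tvert = TU | TW | TP nat nat

definition theta_pos :: "nat list \<Rightarrow> nat \<Rightarrow> nat \<Rightarrow> tvert" where
  "theta_pos ls i j = (if j = 0 then TU else if j = ls ! i then TW else TP i j)"

definition theta_V :: "nat list \<Rightarrow> tvert set" where
  "theta_V ls = {TU, TW} \<union> {TP i j | i j. i < length ls \<and> 1 \<le> j \<and> j < ls ! i}"

definition theta_E :: "nat list \<Rightarrow> tvert \<Rightarrow> tvert \<Rightarrow> bool" where
  "theta_E ls x y = (\<exists>i < length ls. \<exists>j < ls ! i.
      (x = theta_pos ls i j \<and> y = theta_pos ls i (Suc j)) \<or>
      (y = theta_pos ls i j \<and> x = theta_pos ls i (Suc j)))"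

definition graph_square :: "'v set \<Rightarrow> ('v \<Rightarrow> 'v \<Rightarrow> bool) \<Rightarrow> 'v \<Rightarrow> 'v \<Rightarrow> bool" where
  "graph_square V E x y = (x \<in> V \<and> y \<in> V \<and> x \<noteq> y \<and>
      (E x y \<or> (\<exists>z \<in> V. E x z \<and> E z y)))"

definition k_assignment :: "'v set \<Rightarrow> nat \<Rightarrow> ('v \<Rightarrow> nat set) \<Rightarrow> bool" where
  "k_assignment V k L = (\<forall>v \<in> V. finite (L v) \<and> card (L v) = k)"

definition equitable_L_coloring ::
  "'v set \<Rightarrow> ('v \<Rightarrow> 'v \<Rightarrow> bool) \<Rightarrow> nat \<Rightarrow> ('v \<Rightarrow> nat set) \<Rightarrow> ('v \<Rightarrow> nat) \<Rightarrow> bool" where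
  "equitable_L_coloring V E k L f =
     ((\<forall>v \<in> V. f v \<in> L v) \<and>
      (\<forall>x \<in> V. \<forall>y \<in> V. E x y \<longrightarrow> f x \<noteq> f y) \<and>
      (\<forall>c. card {v \<in> V. f v = c} \<le> nat \<lceil>real (card V) / real k\<rceil>))"

definition equitably_choosable :: "'v set \<Rightarrow> ('v \<Rightarrow> 'v \<Rightarrow> bool) \<Rightarrow> nat \<Rightarrow> bool" where
  "equitably_choosable V E k =
     (\<forall>L. k_assignment V k L \<longrightarrow> (\<exists>f. equitable_L_coloring V E k L f))"

end

theory Submission
  imports Defs
begin

text \<open>The 3m vertices of H^2 are split into three blocks, of sizes m + 2, m - 1 and m - 1,
  and ranked block by block. Colouring greedily along the ranking while keeping every block
  rainbow is possible from lists of size m + 2, because each vertex has at most m + 1 earlier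
  vertices that are in its block or adjacent to it in H^2. A rainbow block meets each colour
  class at most once, so no colour is used more than 3 = \<lceil>3m/(m + 2)\<rceil> times (this needs m \<ge> 5).\<close>

lemma mult_add_less_mult_add_imp:
  fixes b c n p q :: nat
  assumes "p < n" "q < n" "b * n + p < c * n + q"
  shows "b < c \<or> b = c \<and> p < q"
proof (rule ccontr)
  assume "\<not> ?thesis"
  then consider "c < b" | "c = b" "q \<le> p" by linarith
  then show False
  proof cases
    case 1
    then have "Suc c * n \<le> b * n" by (intro mult_le_mono1) simp
    then show False using assms by simp
  next
    case 2
    then show False using assms(3) by simp
  qed
qed

lemma greedy_list_coloring:
  fixes r :: "'v \<Rightarrow> nat" and L :: "'v \<Rightarrow> 'c set"
  assumes fin: "finite V"
    and earlier: "\<And>v. v \<in> V \<Longrightarrow> F v \<subseteq> {y \<in> V. r y < r v}"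
    and short: "\<And>v. v \<in> V \<Longrightarrow> card (F v) < card (L v)"
  shows "\<exists>f. \<forall>v \<in> V. f v \<in> L v \<and> f v \<notin> f ` F v"
proof -
  have free_color: "\<exists>c \<in> L v. c \<notin> f ` F v" if "v \<in> V" for v and f :: "'v \<Rightarrow> 'c"
  proof (rule ccontr)
    assume "\<not> ?thesis"
    then have "L v \<subseteq> f ` F v" by blast
    moreover have "finite (F v)" using earlier[OF that] fin by (auto intro: finite_subset)
    ultimately have "card (L v) \<le> card (F v)"
      by (meson card_image_le card_mono finite_imageI le_trans)
    with short[OF that] show False by simp
  qed
  have "\<exists>f. \<forall>v \<in> V. r v < n \<longrightarrow> f v \<in> L v \<and> f v \<notin> f ` F v" for n
  proof (induction n)
    case 0
    show ?case by simp
  next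
    case (Suc n)
    then obtain f where f: "\<forall>v \<in> V. r v < n \<longrightarrow> f v \<in> L v \<and> f v \<notin> f ` F v" by blast
    define g where "g v = (if r v = n then (SOME c. c \<in> L v \<and> c \<notin> f ` F v) else f v)" for v
    have same_on_earlier: "g ` F v = f ` F v" if "v \<in> V" "r v \<le> n" for v
      using earlier[OF that(1)] that(2) by (auto simp: g_def intro!: image_cong)
    have "g v \<in> L v \<and> g v \<notin> g ` F v" if "v \<in> V" "r v < Suc n" for v
    proof (cases "r v = n")
      case True
      then show ?thesis
        using someI_ex[OF free_color[OF that(1), of f, unfolded Bex_def]] same_on_earlier[OF that(1)]
        by (simp add: g_def)
    next
      case False
      then show ?thesis using f that same_on_earlier[OF that(1)] by (simp add: g_def)
    qed
    then show ?case by blast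
  qed
  then obtain f where "\<forall>v \<in> V. r v < Suc (Max (r ` V)) \<longrightarrow> f v \<in> L v \<and> f v \<notin> f ` F v"
    by blast
  moreover have "r v < Suc (Max (r ` V))" if "v \<in> V" for v
    using fin that by (simp add: le_imp_less_Suc)
  ultimately show ?thesis by blast
qed

lemma equitably_choosable_by_ranked_blocks:
  fixes r blk :: "'v \<Rightarrow> nat"
  assumes fin: "finite V"
    and sym: "\<And>x y. E x y \<Longrightarrow> E y x" and irrefl: "\<And>x. \<not> E x x"
    and inj: "inj_on r V"
    and blocks: "\<And>v. v \<in> V \<Longrightarrow> blk v < s"
    and few_blocks: "s \<le> nat \<lceil>real (card V) / real k\<rceil>"
    and sparse: "\<And>v. v \<in> V \<Longrightarrow> card {y \<in> V. r y < r v \<and> (blk y = blk v \<or> E v y)} < k"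
  shows "equitably_choosable V E k"
  unfolding equitably_choosable_def
proof (intro allI impI)
  fix L assume "k_assignment V k L"
  then have card_L: "\<And>v. v \<in> V \<Longrightarrow> card (L v) = k" by (simp add: k_assignment_def)
  define F where "F v = {y \<in> V. r y < r v \<and> (blk y = blk v \<or> E v y)}" for v
  obtain f where f: "\<forall>v \<in> V. f v \<in> L v \<and> f v \<notin> f ` F v"
    using greedy_list_coloring[OF fin, of F r L] sparse card_L unfolding F_def by auto
  have separated: "f x \<noteq> f y" if "x \<in> V" "y \<in> V" "x \<noteq> y" "blk x = blk y \<or> E x y" for x y
  proof -
    have "r x \<noteq> r y" using inj that(1-3) by (meson inj_onD)
    then have "y \<in> F x \<or> x \<in> F y" using that sym unfolding F_def by auto
    then show ?thesis using f that(1,2) by (metis image_eqI)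
  qed
  have "card {v \<in> V. f v = c} \<le> s" for c
  proof -
    have "inj_on blk {v \<in> V. f v = c}"
    proof (rule inj_onI)
      fix x y assume "x \<in> {v \<in> V. f v = c}" "y \<in> {v \<in> V. f v = c}" "blk x = blk y"
      then show "x = y" using separated[of x y] by auto
    qed
    moreover have "blk ` {v \<in> V. f v = c} \<subseteq> {..<s}" using blocks by blast
    ultimately show ?thesis using card_inj_on_le[of blk _ "{..<s}"] by simp
  qed
  then have "equitable_L_coloring V E k L f"
    unfolding equitable_L_coloring_def using f separated irrefl few_blocks le_trans by metis
  then show "\<exists>f. equitable_L_coloring V E k L f" by blast
qed

definition theta24_arc :: "nat \<Rightarrow> tvert \<Rightarrow> tvert \<Rightarrow> bool" where
  "theta24_arc m x y =
     ((\<exists>i<m. x = TU \<and> y = TP i 1) \<or> (x = TP 0 1 \<and> y = TW) \<or>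
      (\<exists>i. 1 \<le> i \<and> i < m \<and>
         (x = TP i 1 \<and> y = TP i 2 \<or> x = TP i 2 \<and> y = TP i 3 \<or> x = TP i 3 \<and> y = TW)))"

definition theta24_adj :: "nat \<Rightarrow> tvert \<Rightarrow> tvert \<Rightarrow> bool" where
  "theta24_adj m x y = (theta24_arc m x y \<or> theta24_arc m y x)"

definition theta24_square :: "nat \<Rightarrow> tvert \<Rightarrow> tvert \<Rightarrow> bool" where
  "theta24_square m x y = (theta24_adj m x y \<or> (\<exists>z. theta24_adj m x z \<and> theta24_adj m z y))"

lemma theta24_adj_simps:
  "theta24_adj m TU z \<longleftrightarrow> (\<exists>i<m. z = TP i 1)"
  "theta24_adj m TW z \<longleftrightarrow> z = TP 0 1 \<or> (\<exists>i. 1 \<le> i \<and> i < m \<and> z = TP i 3)"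
  "theta24_adj m (TP i j) z \<longleftrightarrow>
     (i < m \<and> j = 1 \<and> z = TU) \<or> (i = 0 \<and> j = 1 \<and> z = TW) \<or>
     (1 \<le> i \<and> i < m \<and> (j = 1 \<and> z = TP i 2 \<or> j = 2 \<and> z = TP i 1 \<or> j = 2 \<and> z = TP i 3 \<or>
        j = 3 \<and> z = TP i 2 \<or> j = 3 \<and> z = TW))"
  by (auto simp: theta24_adj_def theta24_arc_def)

definition theta24_V :: "nat \<Rightarrow> tvert set" where
  "theta24_V m = {TU, TW, TP 0 1} \<union> (\<lambda>(i, j). TP i j) ` ({1..<m} \<times> {1..3})"

lemma theta24_V_cases:
  assumes "v \<in> theta24_V m"
  obtains "v = TU" | "v = TW" | "v = TP 0 1"
    | i j where "v = TP i j" "1 \<le> i" "i < m" "j = 1 \<or> j = 2 \<or> j = 3"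
  using assms unfolding theta24_V_def by force

lemma card_theta24_V: "m \<ge> 1 \<Longrightarrow> card (theta24_V m) = 3 * m"
proof -
  assume "m \<ge> 1"
  have "inj_on (\<lambda>(i, j). TP i j) ({1..<m} \<times> {1..3})" by (auto simp: inj_on_def)
  then have "card ((\<lambda>(i, j). TP i j) ` ({1..<m} \<times> {1..3::nat})) = (m - 1) * 3"
    by (simp add: card_image card_cartesian_product)
  moreover have "{TU, TW, TP 0 1} \<inter> (\<lambda>(i, j). TP i j) ` ({1..<m} \<times> {1..3}) = {}" by auto
  ultimately show ?thesis
    using \<open>m \<ge> 1\<close> by (simp add: theta24_V_def card_Un_disjoint)
qed

lemma
  assumes "ls = 2 # replicate (m - 1) 4" "m \<ge> 1"
  shows length_theta24_list: "length ls = m"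
    and theta24_list_nth: "\<And>i. i < m \<Longrightarrow> ls ! i = (if i = 0 then 2 else 4)"
  using assms by (auto simp: nth_Cons')

lemma theta_V_theta24:
  assumes "ls = 2 # replicate (m - 1) 4" "m \<ge> 1"
  shows "theta_V ls = theta24_V m"
proof -
  have "{TP i j | i j. i < length ls \<and> 1 \<le> j \<and> j < ls ! i}
      = {TP 0 1} \<union> (\<lambda>(i, j). TP i j) ` ({1..<m} \<times> {1..3})"
    (is "?internal = _")
  proof (intro set_eqI iffI)
    fix v assume "v \<in> ?internal"
    then obtain i j where "v = TP i j" "i < m" "1 \<le> j" "j < (if i = 0 then 2 else 4)"
      using length_theta24_list[OF assms] theta24_list_nth[OF assms] by force
    then show "v \<in> {TP 0 1} \<union> (\<lambda>(i, j). TP i j) ` ({1..<m} \<times> {1..3})"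
      by (cases "i = 0") force+
  next
    fix v assume "v \<in> {TP 0 1} \<union> (\<lambda>(i, j). TP i j) ` ({1..<m} \<times> {1..3})"
    then show "v \<in> ?internal"
      using length_theta24_list[OF assms] theta24_list_nth[OF assms] \<open>m \<ge> 1\<close> by force
  qed
  then show ?thesis unfolding theta_V_def theta24_V_def by auto
qed

lemma theta_pos_theta24:
  assumes "ls = 2 # replicate (m - 1) 4" "m \<ge> 1" "i < m"
  shows "theta_pos ls i j = (if j = 0 then TU else if j = (if i = 0 then 2 else 4) then TW else TP i j)"
  using theta24_list_nth[OF assms] by (simp add: theta_pos_def)

lemma theta_E_imp_theta24_adj:
  assumes "ls = 2 # replicate (m - 1) 4" "m \<ge> 1" "theta_E ls x y"
  shows "theta24_adj m x y"
proof -
  obtain i j where ij: "i < m" "j < (if i = 0 then 2 else 4)"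
    "x = theta_pos ls i j \<and> y = theta_pos ls i (Suc j) \<or> y = theta_pos ls i j \<and> x = theta_pos ls i (Suc j)"
    using assms(3) length_theta24_list[OF assms(1,2)] theta24_list_nth[OF assms(1,2)]
    unfolding theta_E_def by auto
  note pos = theta_pos_theta24[OF assms(1,2) ij(1)]
  consider "i = 0" "j = 0 \<or> j = 1" | "i \<noteq> 0" "j = 0 \<or> j = 1 \<or> j = 2 \<or> j = 3"
    using ij(2) by (cases "i = 0") (simp_all add: less_Suc_eq numeral_eq_Suc)
  then show ?thesis using ij(1,3) unfolding pos by cases (auto simp: theta24_adj_simps)
qed

text \<open>In slot order the blocks are
    0: u, w, TP 0 1, TP 2 2, TP 2 1, TP 3 1, \<dots>, TP (m - 1) 1;
    1: TP 2 3, TP 3 3, \<dots>, TP (m - 1) 3, TP 3 2;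
    2: TP 1 1, TP 1 3, TP 4 2, \<dots>, TP (m - 1) 2, TP 1 2.
  Vertices with many H^2-neighbours in earlier blocks come early in their own block.\<close>

fun theta24_block :: "tvert \<Rightarrow> nat" where
  "theta24_block TU = 0"
| "theta24_block TW = 0"
| "theta24_block (TP i j) =
     (if i = 0 then 0
      else if j = 1 then (if i = 1 then 2 else 0)
      else if j = 3 then (if i = 1 then 2 else 1)
      else if i = 2 then 0 else if i = 3 then 1 else 2)"

fun theta24_slot :: "nat \<Rightarrow> tvert \<Rightarrow> nat" where
  "theta24_slot m TU = 0"
| "theta24_slot m TW = 1"
| "theta24_slot m (TP i j) =
     (if i = 0 then 2
      else if j = 1 then (if i = 1 then 0 else i + 2)
      else if j = 3 then (if i = 1 then 1 else if i = 2 then 0 else i - 2)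
      else if i = 2 then 3 else if i = 1 \<or> i = 3 then m - 2 else i - 2)"

definition theta24_at :: "nat \<Rightarrow> nat \<Rightarrow> nat \<Rightarrow> tvert" where
  "theta24_at m b p =
     (if b = 0 then
        (if p = 0 then TU else if p = 1 then TW else if p = 2 then TP 0 1
         else if p = 3 then TP 2 2 else TP (p - 2) 1)
      else if b = 1 then (if p = 0 then TP 2 3 else if p = m - 2 then TP 3 2 else TP (p + 2) 3)
      else (if p = 0 then TP 1 1 else if p = 1 then TP 1 3 else if p = m - 2 then TP 1 2
            else TP (p + 2) 2))"

lemma theta24_block_less: "theta24_block v < 3"
  by (cases v) auto

lemma theta24_slot_less: "m \<ge> 5 \<Longrightarrow> v \<in> theta24_V m \<Longrightarrow> theta24_slot m v < m + 2"
  by (erule theta24_V_cases) auto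

lemma theta24_at_block_slot:
  assumes "m \<ge> 5" "v \<in> theta24_V m"
  shows "theta24_at m (theta24_block v) (theta24_slot m v) = v"
  using assms(2)
proof (cases rule: theta24_V_cases)
  case (4 i j)
  then consider "i = 1" | "i = 2" | "i = 3" | "i \<ge> 4" by linarith
  then show ?thesis using 4 assms(1) by cases (auto simp: theta24_at_def)
qed (auto simp: theta24_at_def)

definition theta24_rank :: "nat \<Rightarrow> tvert \<Rightarrow> nat" where
  "theta24_rank m v = theta24_block v * (m + 2) + theta24_slot m v"

lemma inj_on_theta24_rank: "m \<ge> 5 \<Longrightarrow> inj_on (theta24_rank m) (theta24_V m)"
proof (rule inj_on_inverseI)
  fix v assume "m \<ge> 5" "v \<in> theta24_V m"
  moreover from this have "theta24_slot m v < m + 2" by (rule theta24_slot_less)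
  then have "theta24_rank m v div (m + 2) = theta24_block v"
    and "theta24_rank m v mod (m + 2) = theta24_slot m v"
    unfolding theta24_rank_def by (simp_all only: div_mult_self3 mod_mult_self3 div_less mod_less)
  ultimately show "theta24_at m (theta24_rank m v div (m + 2)) (theta24_rank m v mod (m + 2)) = v"
    by (simp add: theta24_at_block_slot)
qed

lemma theta24_rank_less_imp:
  assumes "m \<ge> 5" "v \<in> theta24_V m" "y \<in> theta24_V m" "theta24_rank m y < theta24_rank m v"
  shows "theta24_block y < theta24_block v \<or>
    theta24_block y = theta24_block v \<and> theta24_slot m y < theta24_slot m v"
  using mult_add_less_mult_add_imp theta24_slot_less assms unfolding theta24_rank_def by blast

fun theta24_earlier_block_nbrs :: "nat \<Rightarrow> tvert \<Rightarrow> tvert set" where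
  "theta24_earlier_block_nbrs m TU = {}"
| "theta24_earlier_block_nbrs m TW = {}"
| "theta24_earlier_block_nbrs m (TP i j) =
     (if i = 0 then {}
      else if j = 1 then (if i = 1 then {TU, TP 0 1} \<union> (\<lambda>k. TP k 1) ` {2..<m} else {})
      else if j = 3 then
        (if i = 1 then {TW, TP 0 1} \<union> (\<lambda>k. TP k 3) ` {2..<m}
         else if i = 2 then {TW, TP 0 1, TP 2 1, TP 2 2} else {TW, TP 0 1, TP i 1})
      else if i = 1 then {TU, TW} else if i = 2 then {}
      else if i = 3 then {TU, TW, TP 3 1} else {TU, TW, TP i 1, TP i 3})"

lemma theta24_square_earlier_block:
  assumes "v \<in> theta24_V m" "y \<in> theta24_V m" "theta24_square m v y"
    and "theta24_block y < theta24_block v"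
  shows "y \<in> theta24_earlier_block_nbrs m v"
  using assms(1)
proof (cases rule: theta24_V_cases)
  case v: (4 i j)
  from assms(2) show ?thesis
  proof (cases rule: theta24_V_cases)
    case (4 k l)
    with v assms(3,4) show ?thesis
      by (auto simp: theta24_square_def theta24_adj_simps image_iff split: if_splits)
  qed (use v assms(3,4) in \<open>auto simp: theta24_square_def theta24_adj_simps\<close>)
qed (use assms(4) in auto)

lemma finite_theta24_earlier_block_nbrs: "finite (theta24_earlier_block_nbrs m v)"
  by (cases v) auto

lemma card_theta24_earlier_block_nbrs:
  assumes "m \<ge> 5" "v \<in> theta24_V m"
  shows "card (theta24_earlier_block_nbrs m v) + theta24_slot m v \<le> m + 1"
  using assms(2)
proof (cases rule: theta24_V_cases)
  case (4 i j)
  have fan: "card ({a, b} \<union> (\<lambda>k. TP k l) ` {2..<m}) \<le> m" for a b l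
  proof -
    have "card ({a, b} \<union> (\<lambda>k. TP k l) ` {2..<m}) \<le> card {a, b} + card ((\<lambda>k. TP k l) ` {2..<m})"
      by (rule card_Un_le)
    also have "\<dots> \<le> 2 + (m - 2)"
      using card_image_le[of "{2..<m}" "\<lambda>k. TP k l"] card_length[of "[a, b]"] by simp
    finally show ?thesis using assms(1) by simp
  qed
  have small: "card {a, b, c} \<le> 3" "card {a, b, c, d} \<le> 4" for a b c d :: tvert
    using card_length[of "[a, b, c]"] card_length[of "[a, b, c, d]"] by simp_all
  consider "i = 1" | "i = 2" | "i = 3" | "i \<ge> 4" using 4 by linarith
  then show ?thesis
  proof cases
    case 1
    then show ?thesis
      using 4 fan[of TU "TP 0 1" 1] fan[of TW "TP 0 1" 3] card_length[of "[TU, TW]"] assms(1)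
      by auto
  qed (use 4 small assms(1) in auto)
qed (use assms(1) in auto)

lemma finite_theta24_V: "finite (theta24_V m)"
  by (simp add: theta24_V_def)

lemma card_theta24_earlier_conflicts:
  assumes "m \<ge> 5" "v \<in> theta24_V m" and E: "\<And>y. E v y \<Longrightarrow> theta24_square m v y"
  shows "card {y \<in> theta24_V m. theta24_rank m y < theta24_rank m v \<and>
      (theta24_block y = theta24_block v \<or> E v y)} \<le> m + 1"
    (is "card ?conflicts \<le> _")
proof -
  let ?same = "{y \<in> theta24_V m. theta24_block y = theta24_block v \<and> theta24_slot m y < theta24_slot m v}"
  have covered: "?conflicts \<subseteq> ?same \<union> theta24_earlier_block_nbrs m v"
  proof
    fix y assume y: "y \<in> ?conflicts"
    then show "y \<in> ?same \<union> theta24_earlier_block_nbrs m v"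
      using theta24_rank_less_imp[OF assms(1,2), of y] theta24_square_earlier_block[OF assms(2), of y] E
      by (cases "theta24_block y = theta24_block v") auto
  qed
  have "card ?conflicts \<le> card ?same + card (theta24_earlier_block_nbrs m v)"
    using card_mono[OF _ covered] card_Un_le[of ?same "theta24_earlier_block_nbrs m v"]
      finite_theta24_V finite_theta24_earlier_block_nbrs by fastforce
  moreover have "card ?same \<le> theta24_slot m v"
  proof -
    have "inj_on (theta24_slot m) ?same"
      by (rule inj_on_inverseI[where g = "theta24_at m (theta24_block v)"])
        (clarsimp, metis theta24_at_block_slot[OF assms(1)])
    moreover have "theta24_slot m ` ?same \<subseteq> {..<theta24_slot m v}" by auto
    ultimately show ?thesis using card_inj_on_le[of _ _ "{..<theta24_slot m v}"] by simp
  qed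
  ultimately show ?thesis using card_theta24_earlier_block_nbrs[OF assms(1,2)] by simp
qed

lemma three_le_ceiling_three_mul_div: "m \<ge> 5 \<Longrightarrow> 3 \<le> nat \<lceil>real (3 * m) / real (m + 2)\<rceil>"
proof -
  assume "m \<ge> 5"
  then have "2 < real (3 * m) / real (m + 2)" by (simp add: field_simps)
  then have "3 \<le> \<lceil>real (3 * m) / real (m + 2)\<rceil>" by (simp add: le_ceiling_iff)
  then show ?thesis by linarith
qed

theorem lemma3p7:
  fixes m :: nat and ls :: "nat list"
  assumes "m \<ge> 5"
    and "ls = 2 # replicate (m - 1) 4"
  shows "equitably_choosable (theta_V ls) (graph_square (theta_V ls) (theta_E ls)) (m + 2)"
proof -
  have m: "m \<ge> 1" using assms(1) by simp
  let ?G = "graph_square (theta24_V m) (theta_E ls)"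
  have square: "theta24_square m x y" if "?G x y" for x y
    using that theta_E_imp_theta24_adj[OF assms(2) m]
    unfolding graph_square_def theta24_square_def by blast
  have sparse: "card {y \<in> theta24_V m. theta24_rank m y < theta24_rank m v \<and>
      (theta24_block y = theta24_block v \<or> ?G v y)} < m + 2" if "v \<in> theta24_V m" for v
    using card_theta24_earlier_conflicts[OF assms(1) that, of ?G] square by fastforce
  show ?thesis
    unfolding theta_V_theta24[OF assms(2) m]
  proof (rule equitably_choosable_by_ranked_blocks[where r = "theta24_rank m" and blk = theta24_block])
    show "\<And>x y. ?G x y \<Longrightarrow> ?G y x" unfolding graph_square_def theta_E_def by blast
    show "3 \<le> nat \<lceil>real (card (theta24_V m)) / real (m + 2)\<rceil>"
      using three_le_ceiling_three_mul_div[OF assms(1)] card_theta24_V[OF m] by simp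
    show "\<And>x. \<not> ?G x x" by (simp add: graph_square_def)
  qed (use finite_theta24_V inj_on_theta24_rank[OF assms(1)] theta24_block_less sparse in blast)+
qed

end
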